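(* Let $(\mu_t)_{t\ge0}$ be a Sinkhorn potential flow of $V$. Then for a.e. $t$ at which $s\mapsto E(\mu_s)$ is differentiable, $$\frac{d}{dt}E(\mu_t)=-\mathbf g_{\mu_t}(\dot\mu_t,\dot\mu_t).$$
   Context: Standing setting: $(\mathcal X,\mathsf d)$ compact metric space; $\varepsilon>0$; $c$ symmetric, nonnegative, continuous, $k_c:=\exp(-c/\varepsilon)$ a positive definite universal kernel with RKHS $\mathcal H_c$; $V\in C(\mathcal X)$, $E(\mu)=\int Vd\mu$. Schrödinger potentials: $T_\varepsilon(f,\mu)(y):=-\varepsilon\log\int\exp((f(x)-c(x,y))/\varepsilon)d\mu(x)$; $f_\mu\in C(\mathcal X)$ the unique solution of $f_\mu=T_\varepsilon(f_\mu,\mu)$. $k_\mu(x,y):=\exp((f_\mu(x)+f_\mu(y)-c(x,y))/\varepsilon)$ with RKHS $\mathcal H_\mu$; $H_c,H_\mu$ Riesz isomorphisms from the duals (on measures, integration against the kernel); $K_\mu[\phi]:=H_\mu[\phi\mu]$; $\mathrm{Id}-K_\mu^2$ invertible on $C(\mathcal X)/\mathbb R$. $B(\mu):=\exp(-f_\mu/\varepsilon)$. $T_\mu:=\{\sigma\in\mathcal H_\mu^*:\langle\sigma,1\rangle=0\}$, $\mathbf g_\mu(\sigma_1,\sigma_2):=\frac\varepsilon2\langle\sigma_1,(\mathrm{Id}-K_\mu^2)^{-1}H_\mu[\sigma_2]\rangle$, a continuous quadratic form on $T_\mu$. A Sinkhorn potential flow is a curve $(\mu_t)_{t\ge0}$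 in $\mathcal P(\mathcal X)$ with $t\mapsto B(\mu_t)\in\mathscr H^1_{loc}([0,\infty);\mathcal H_c)$ (so that for a.e. $t$ the weak-* derivative $\dot\mu_t\in T_{\mu_t}$ in $\mathcal H_{\mu_t}^*$ exists) such that for a.e. $t$ there exist $p_t\in C(\mathcal X)$, $p_t\le0$, $p_t=0$ on $\operatorname{supp}\mu_t$, and $C_t\in\mathbb R$ with $\frac\varepsilon2(\mathrm{Id}-K_{\mu_t}^2)^{-1}H_{\mu_t}[\dot\mu_t]+V+p_t=C_t$. *)

theory Defs
  imports "HOL-Probability.Probability"
begin

definition fsupp :: "('a \<Rightarrow> real) \<Rightarrow> 'a set" where
  "fsupp a = {y. a y \<noteq> 0}"

definition pre_fun :: "('a \<Rightarrow> 'a \<Rightarrow> real) \<Rightarrow> ('a \<Rightarrow> real) \<Rightarrow> 'a \<Rightarrow> real" where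
  "pre_fun k a = (\<lambda>x. \<Sum>y\<in>fsupp a. a y * k y x)"

definition pre_sq :: "('a \<Rightarrow> 'a \<Rightarrow> real) \<Rightarrow> ('a \<Rightarrow> real) \<Rightarrow> real" where
  "pre_sq k a = (\<Sum>y\<in>fsupp a. \<Sum>z\<in>fsupp a. a y * a z * k y z)"

definition psd_kernel :: "('a \<Rightarrow> 'a \<Rightarrow> real) \<Rightarrow> bool" where
  "psd_kernel k \<longleftrightarrow> (\<forall>x y. k x y = k y x) \<and> (\<forall>a. finite (fsupp a) \<longrightarrow> pre_sq k a \<ge> 0)"

definition rkhs_approx :: "('a \<Rightarrow> 'a \<Rightarrow> real) \<Rightarrow> ('a \<Rightarrow> real) \<Rightarrow> (nat \<Rightarrow> 'a \<Rightarrow> real) \<Rightarrow> bool" where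
  "rkhs_approx k f A \<longleftrightarrow>
     (\<forall>n. finite (fsupp (A n))) \<and>
     (\<forall>x. (\<lambda>n. pre_fun k (A n) x) \<longlonglongrightarrow> f x) \<and>
     (\<forall>e>0. \<exists>N. \<forall>m\<ge>N. \<forall>n\<ge>N. pre_sq k (\<lambda>y. A m y - A n y) < e)"

definition rkhs :: "('a \<Rightarrow> 'a \<Rightarrow> real) \<Rightarrow> ('a \<Rightarrow> real) set" where
  "rkhs k = {f. \<exists>A. rkhs_approx k f A}"

definition rkhs_norm :: "('a \<Rightarrow> 'a \<Rightarrow> real) \<Rightarrow> ('a \<Rightarrow> real) \<Rightarrow> real" where
  "rkhs_norm k f = (THE r. \<exists>A. rkhs_approx k f A \<and> (\<lambda>n. sqrt (pre_sq k (A n))) \<longlonglongrightarrow> r)"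

definition universal_kernel :: "('a::topological_space \<Rightarrow> 'a \<Rightarrow> real) \<Rightarrow> bool" where
  "universal_kernel k \<longleftrightarrow>
     (\<forall>g. continuous_on UNIV g \<longrightarrow> (\<forall>e>0. \<exists>h\<in>rkhs k. \<forall>x. \<bar>g x - h x\<bar> < e))"

definition in_dual :: "('a \<Rightarrow> 'a \<Rightarrow> real) \<Rightarrow> (('a \<Rightarrow> real) \<Rightarrow> real) \<Rightarrow> bool" where
  "in_dual k \<sigma> \<longleftrightarrow>
     (\<forall>f\<in>rkhs k. \<forall>g\<in>rkhs k. \<sigma> (\<lambda>x. f x + g x) = \<sigma> f + \<sigma> g) \<and>
     (\<forall>f\<in>rkhs k. \<forall>r. \<sigma> (\<lambda>x. r * f x) = r * \<sigma> f) \<and>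
     (\<exists>C. \<forall>f\<in>rkhs k. \<bar>\<sigma> f\<bar> \<le> C * rkhs_norm k f)"

definition is_prob :: "'a::topological_space measure \<Rightarrow> bool" where
  "is_prob M \<longleftrightarrow> prob_space M \<and> sets M = sets borel"

definition msupport :: "'a::topological_space measure \<Rightarrow> 'a set" where
  "msupport M = {x. \<forall>U. open U \<longrightarrow> x \<in> U \<longrightarrow> emeasure M U > 0}"

definition energy :: "('a \<Rightarrow> real) \<Rightarrow> 'a measure \<Rightarrow> real" where
  "energy V M = (\<integral>x. V x \<partial>M)"

definition T_eps :: "real \<Rightarrow> ('a \<Rightarrow> 'a \<Rightarrow> real) \<Rightarrow> ('a \<Rightarrow> real) \<Rightarrow> 'a measure \<Rightarrow> 'a \<Rightarrow> real" where
  "T_eps eps c f M y = - eps * ln (\<integral>x. exp ((f x - c x y) / eps) \<partial>M)"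

definition schr_pot :: "real \<Rightarrow> ('a::topological_space \<Rightarrow> 'a \<Rightarrow> real) \<Rightarrow> 'a measure \<Rightarrow> 'a \<Rightarrow> real" where
  "schr_pot eps c M = (THE f. continuous_on UNIV f \<and> f = T_eps eps c f M)"

definition kmu :: "real \<Rightarrow> ('a::topological_space \<Rightarrow> 'a \<Rightarrow> real) \<Rightarrow> 'a measure \<Rightarrow> 'a \<Rightarrow> 'a \<Rightarrow> real" where
  "kmu eps c M x y = exp ((schr_pot eps c M x + schr_pot eps c M y - c x y) / eps)"

definition kc :: "real \<Rightarrow> ('a \<Rightarrow> 'a \<Rightarrow> real) \<Rightarrow> 'a \<Rightarrow> 'a \<Rightarrow> real" where
  "kc eps c x y = exp (- c x y / eps)"

text \<open>K_mu[phi] = H_mu[phi mu].\<close>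
definition Kop :: "real \<Rightarrow> ('a::topological_space \<Rightarrow> 'a \<Rightarrow> real) \<Rightarrow> 'a measure \<Rightarrow> ('a \<Rightarrow> real) \<Rightarrow> 'a \<Rightarrow> real" where
  "Kop eps c M \<phi> x = (\<integral>y. kmu eps c M x y * \<phi> y \<partial>M)"

definition Hmap :: "real \<Rightarrow> ('a::topological_space \<Rightarrow> 'a \<Rightarrow> real) \<Rightarrow> 'a measure \<Rightarrow> (('a \<Rightarrow> real) \<Rightarrow> real) \<Rightarrow> 'a \<Rightarrow> real" where
  "Hmap eps c M \<sigma> x = \<sigma> (\<lambda>y. kmu eps c M x y)"

definition Bfun :: "real \<Rightarrow> ('a::topological_space \<Rightarrow> 'a \<Rightarrow> real) \<Rightarrow> 'a measure \<Rightarrow> 'a \<Rightarrow> real" where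
  "Bfun eps c M x = exp (- schr_pot eps c M x / eps)"

definition in_T :: "real \<Rightarrow> ('a::topological_space \<Rightarrow> 'a \<Rightarrow> real) \<Rightarrow> 'a measure \<Rightarrow> (('a \<Rightarrow> real) \<Rightarrow> real) \<Rightarrow> bool" where
  "in_T eps c M \<sigma> \<longleftrightarrow> in_dual (kmu eps c M) \<sigma> \<and> \<sigma> (\<lambda>_. 1) = 0"

text \<open>(Id - K_mu^2)^{-1} on C(X)/R: a continuous representative u with (Id - K_mu^2) u = g mod constants.\<close>
definition inv_res :: "real \<Rightarrow> ('a::topological_space \<Rightarrow> 'a \<Rightarrow> real) \<Rightarrow> 'a measure \<Rightarrow> ('a \<Rightarrow> real) \<Rightarrow> 'a \<Rightarrow> real" where
  "inv_res eps c M g = (SOME u. continuous_on UNIV u \<and>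
      (\<exists>C. \<forall>x. u x - Kop eps c M (Kop eps c M u) x - g x = C))"

definition gmetric :: "real \<Rightarrow> ('a::topological_space \<Rightarrow> 'a \<Rightarrow> real) \<Rightarrow> 'a measure \<Rightarrow>
    (('a \<Rightarrow> real) \<Rightarrow> real) \<Rightarrow> (('a \<Rightarrow> real) \<Rightarrow> real) \<Rightarrow> real" where
  "gmetric eps c M \<sigma>1 \<sigma>2 = eps / 2 * \<sigma>1 (inv_res eps c M (Hmap eps c M \<sigma>2))"

definition wstar_deriv :: "real \<Rightarrow> ('a::topological_space \<Rightarrow> 'a \<Rightarrow> real) \<Rightarrow> (real \<Rightarrow> 'a measure) \<Rightarrow> real \<Rightarrow>
    (('a \<Rightarrow> real) \<Rightarrow> real) \<Rightarrow> bool" where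
  "wstar_deriv eps c \<mu> t \<sigma> \<longleftrightarrow> in_dual (kmu eps c (\<mu> t)) \<sigma> \<and>
     (\<forall>\<phi>\<in>rkhs (kmu eps c (\<mu> t)).
        ((\<lambda>s. ((\<integral>x. \<phi> x \<partial>\<mu> s) - (\<integral>x. \<phi> x \<partial>\<mu> t)) / (s - t)) \<longlongrightarrow> \<sigma> \<phi>) (at t within {0..}))"

text \<open>b belongs to H^1_loc([0,oo); H_k): b and a weak derivative b' are locally L^2 in H_k
  and b(t) - b(s) is the (Bochner) integral of b' over [s,t], tested against point evaluations.\<close>
definition h1loc :: "('a \<Rightarrow> 'a \<Rightarrow> real) \<Rightarrow> (real \<Rightarrow> 'a \<Rightarrow> real) \<Rightarrow> bool" where
  "h1loc k b \<longleftrightarrow> (\<exists>b'.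
     (AE t in lborel. t \<ge> 0 \<longrightarrow> b t \<in> rkhs k \<and> b' t \<in> rkhs k) \<and>
     (\<forall>x. (\<lambda>t. b t x) \<in> borel_measurable lborel \<and> (\<lambda>t. b' t x) \<in> borel_measurable lborel) \<and>
     (\<forall>T\<ge>0. (\<integral>\<^sup>+ t. indicator {0..T} t *
          ennreal ((rkhs_norm k (b t))\<^sup>2 + (rkhs_norm k (b' t))\<^sup>2) \<partial>lborel) < \<infinity>) \<and>
     (AE s in lborel. AE t in lborel. 0 \<le> s \<longrightarrow> s \<le> t \<longrightarrow>
        (\<forall>x. set_integrable lborel {s..t} (\<lambda>r. b' r x) \<and>
             b t x - b s x = set_lebesgue_integral lborel {s..t} (\<lambda>r. b' r x))))"

definition sinkhorn_flow :: "real \<Rightarrow> ('a::topological_space \<Rightarrow> 'a \<Rightarrow> real) \<Rightarrow> ('a \<Rightarrow> real) \<Rightarrow> (real \<Rightarrow> 'a measure) \<Rightarrow> bool" where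
  "sinkhorn_flow eps c V \<mu> \<longleftrightarrow>
     (\<forall>t\<ge>0. is_prob (\<mu> t)) \<and>
     h1loc (kc eps c) (\<lambda>t. Bfun eps c (\<mu> t)) \<and>
     (AE t in lborel. t \<ge> 0 \<longrightarrow>
        (\<exists>\<sigma>. wstar_deriv eps c \<mu> t \<sigma> \<and> in_T eps c (\<mu> t) \<sigma> \<and>
           (\<exists>u p C. continuous_on UNIV u \<and>
              (\<exists>C'. \<forall>x. u x - Kop eps c (\<mu> t) (Kop eps c (\<mu> t) u) x - Hmap eps c (\<mu> t) \<sigma> x = C') \<and>
              continuous_on UNIV p \<and> (\<forall>x. p x \<le> 0) \<and> (\<forall>x\<in>msupport (\<mu> t). p x = 0) \<and>
              (\<forall>x. eps / 2 * u x + V x + p x = C))))"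

end

theory Submission
  imports Defs
begin

text \<open>
  The operator \<open>T\<^sub>\<epsilon>(\<cdot>, \<mu>)\<close> contracts the oscillation of differences of potentials by the
  factor \<open>1 - exp (-2 sup c / \<epsilon>)\<close>: a Harnack bound for the kernel \<open>exp (-c / \<epsilon>)\<close> turns
  the ratio of two Gibbs integrals into a mixture, and concavity of \<open>ln\<close> does the rest.
  Iterating \<open>T\<^sub>\<epsilon>\<close> therefore yields a unique Schroedinger potential \<open>f\<^sub>\<mu>\<close>, so \<open>k\<^sub>\<mu>\<close> is a
  strictly positive Markov kernel and \<open>K\<^sub>\<mu>\<close> obeys a maximum principle: the equation
  \<open>(Id - K\<^sub>\<mu>\<^sup>2) u = g\<close> determines \<open>u\<close> up to a constant.

  Along the flow, \<open>V = C - p\<^sub>t - \<epsilon>/2 u\<^sub>t\<close> with \<open>u\<^sub>t = (Id - K\<^sub>\<mu>\<^sub>t\<^sup>2)\<^sup>-\<^sup>1 H\<^sub>\<mu>\<^sub>t[\<mu>'\<^sub>t]\<close>, hence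
  \<open>E(\<mu>\<^sub>s) = C - \<integral>p\<^sub>t d\<mu>\<^sub>s - \<epsilon>/2 \<integral>u\<^sub>t d\<mu>\<^sub>s\<close>. Since \<open>p\<^sub>t \<le> 0\<close> vanishes on the support of
  \<open>\<mu>\<^sub>t\<close>, the middle term has an interior maximum at \<open>s = t\<close>, so its derivative vanishes and
  \<open>dE/dt = -\<epsilon>/2 \<langle>\<mu>'\<^sub>t, u\<^sub>t\<rangle> = -g\<^sub>\<mu>\<^sub>t(\<mu>'\<^sub>t, \<mu>'\<^sub>t)\<close>.
\<close>

section \<open>Continuous functions on a compact probability space\<close>

locale compact_prob =
  fixes M :: "'a::metric_space measure"
  assumes compact_UNIV: "compact (UNIV :: 'a set)"
    and is_prob_M: "is_prob M"
begin

sublocale prob_space M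
  using is_prob_M by (simp add: is_prob_def)

lemma sets_M: "sets M = sets borel"
  using is_prob_M by (simp add: is_prob_def)

lemma continuous_measurable: "continuous_on UNIV f \<Longrightarrow> (f :: 'a \<Rightarrow> real) \<in> borel_measurable M"
  by (subst measurable_cong_sets[OF sets_M refl]) (rule borel_measurable_continuous_onI)

lemma continuous_bounded: "continuous_on UNIV (f :: 'a \<Rightarrow> real) \<Longrightarrow> \<exists>B. \<forall>x. \<bar>f x\<bar> \<le> B"
  using compact_imp_bounded[OF compact_continuous_image[OF _ compact_UNIV]]
  by (fastforce simp: bounded_iff)

lemma continuous_integrable: "continuous_on UNIV (f :: 'a \<Rightarrow> real) \<Longrightarrow> integrable M f"
proof -
  assume f: "continuous_on UNIV f"
  obtain B where "\<And>x. \<bar>f x\<bar> \<le> B" using continuous_bounded[OF f] by blast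
  then show ?thesis
    by (intro integrable_const_bound[where B=B] AE_I2 continuous_measurable[OF f]) auto
qed

lemma integral_pos_continuous:
  assumes "continuous_on UNIV f" and "\<And>x. f x > (0::real)"
  shows "integral\<^sup>L M f > 0"
proof -
  obtain x0 where x0: "\<And>x. f x0 \<le> f x"
    using continuous_attains_inf[OF compact_UNIV _ assms(1)] by auto
  have "f x0 \<le> integral\<^sup>L M f"
    using integral_mono[OF integrable_const continuous_integrable[OF assms(1)] x0]
    by (simp add: prob_space)
  then show ?thesis using assms(2)[of x0] by linarith
qed

lemma abs_integral_diff_le:
  assumes "integrable M f" "integrable M g" "\<And>y. \<bar>f y - g y\<bar> \<le> (K::real)"
  shows "\<bar>integral\<^sup>L M f - integral\<^sup>L M g\<bar> \<le> K"
proof -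
  have "\<bar>integral\<^sup>L M f - integral\<^sup>L M g\<bar> = \<bar>\<integral>y. f y - g y \<partial>M\<bar>"
    using assms by simp
  also have "\<dots> \<le> (\<integral>y. \<bar>f y - g y\<bar> \<partial>M)"
    by (rule integral_abs_bound)
  also have "\<dots> \<le> (\<integral>y. K \<partial>M)"
    using assms by (intro integral_mono) auto
  finally show ?thesis by (simp add: prob_space)
qed

lemma continuous_on_integral_param:
  fixes H :: "'a \<times> 'a \<Rightarrow> real"
  assumes H: "continuous_on UNIV H"
  shows "continuous_on UNIV (\<lambda>x. \<integral>y. H (x, y) \<partial>M)"
  unfolding continuous_on_iff
proof (intro ballI allI impI)
  fix x :: 'a and e :: real assume e: "e > 0"
  have "uniformly_continuous_on UNIV H"
    using compact_Times[OF compact_UNIV compact_UNIV] H by (intro compact_uniformly_continuous) auto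
  then obtain r where r: "r > 0" and close: "\<And>p q. dist q p < r \<Longrightarrow> dist (H q) (H p) < e / 2"
    using e unfolding uniformly_continuous_on_def by (metis UNIV_I half_gt_zero)
  have Hy: "continuous_on UNIV (\<lambda>y. H (z, y))" for z
    by (rule continuous_on_compose2[OF H]) (auto intro!: continuous_intros)
  show "\<exists>r>0. \<forall>x'\<in>UNIV. dist x' x < r \<longrightarrow> dist (\<integral>y. H (x', y) \<partial>M) (\<integral>y. H (x, y) \<partial>M) < e"
  proof (intro exI[of _ r] conjI ballI impI r)
    fix x' assume "dist x' x < r"
    then have "\<bar>H (x', y) - H (x, y)\<bar> \<le> e / 2" for y
      using close[of "(x', y)" "(x, y)"] by (simp add: dist_Pair_Pair dist_real_def)
    then have "\<bar>(\<integral>y. H (x', y) \<partial>M) - (\<integral>y. H (x, y) \<partial>M)\<bar> \<le> e / 2"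
      by (intro abs_integral_diff_le continuous_integrable Hy)
    then show "dist (\<integral>y. H (x', y) \<partial>M) (\<integral>y. H (x, y) \<partial>M) < e"
      using e by (simp add: dist_real_def)
  qed
qed

lemma compact_null_if_disjoint_msupport:
  assumes "compact S" and "S \<inter> msupport M = {}"
  shows "S \<in> null_sets M"
proof -
  define T where "T = {U. open U \<and> emeasure M U = 0}"
  have "S \<subseteq> \<Union>T"
  proof
    fix x assume "x \<in> S"
    then have "x \<notin> msupport M" using assms(2) by blast
    then obtain U where "open U" "x \<in> U" "\<not> emeasure M U > 0"
      unfolding msupport_def by blast
    then show "x \<in> \<Union>T" by (auto simp: T_def)
  qed
  then obtain T' where T': "T' \<subseteq> T" "finite T'" "S \<subseteq> \<Union>T'"
    using compactE[OF assms(1)] by (metis T_def mem_Collect_eq)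
  have "U \<in> null_sets M" if "U \<in> T'" for U
    using T'(1) that by (auto simp: T_def null_sets_def sets_M)
  then have "\<Union>T' \<in> null_sets M"
    using null_sets_UN'[of T' id M] T'(2) countable_finite by auto
  moreover have "S \<in> sets M"
    using assms(1) by (simp add: sets_M compact_imp_closed)
  ultimately show ?thesis
    using T'(3) null_sets_subset by blast
qed

lemma integral_eq_0_if_nonpos_vanishing_on_msupport:
  fixes p :: "'a \<Rightarrow> real"
  assumes p: "continuous_on UNIV p" and "\<And>x. p x \<le> 0" and "\<And>x. x \<in> msupport M \<Longrightarrow> p x = 0"
  shows "integral\<^sup>L M p = 0"
proof -
  have "{x. p x \<le> - inverse (Suc n)} \<in> null_sets M" for n
  proof (rule compact_null_if_disjoint_msupport)
    show "compact {x. p x \<le> - inverse (Suc n)}"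
      by (intro closed_Int_compact[OF _ compact_UNIV, simplified] closed_Collect_le p continuous_on_const)
    show "{x. p x \<le> - inverse (Suc n)} \<inter> msupport M = {}"
      using assms(3) by (fastforce simp: not_le[symmetric])
  qed
  then have "AE x in M. \<not> p x \<le> - inverse (Suc n)" for n
    by (rule AE_I') auto
  then have "AE x in M. \<forall>n. \<not> p x \<le> - inverse (Suc n)"
    by (simp add: AE_all_countable)
  then have "AE x in M. p x = 0"
  proof (rule AE_mp, intro AE_I2 impI)
    fix x assume above: "\<forall>n. \<not> p x \<le> - inverse (Suc n)"
    show "p x = 0"
    proof (rule ccontr)
      assume "p x \<noteq> 0"
      then obtain n where "inverse (Suc n) < - p x"
        using assms(2)[of x] reals_Archimedean[of "- p x"] by force
      then show False using above[rule_format, of n] by linarith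
    qed
  qed
  then show ?thesis
    by (simp add: integral_eq_zero_AE)
qed

end

section \<open>The Schroedinger operator\<close>

lemma ln_mixture_contraction:
  fixes R R' \<alpha> \<beta> \<theta> :: real
  assumes "0 \<le> \<theta>" "\<theta> \<le> 1" "0 < \<alpha>" "0 < R'" "R' \<le> \<beta>"
    and mix: "\<theta> * R' + (1 - \<theta>) * \<alpha> \<le> R"
  shows "ln R' - ln R \<le> (1 - \<theta>) * (ln \<beta> - ln \<alpha>)"
proof -
  have mix_pos: "0 < \<theta> * R' + (1 - \<theta>) * \<alpha>"
    using assms(1-4) by (cases "\<theta> = 0") (auto intro: add_pos_nonneg)
  have "\<theta> * ln R' + (1 - \<theta>) * ln \<alpha> \<le> ln (\<theta> * R' + (1 - \<theta>) * \<alpha>)"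
    using ln_concave assms(1-4) by (simp add: concave_on_iff)
  also have "\<dots> \<le> ln R"
    using mix mix_pos by simp
  finally have "ln R' - ln R \<le> (1 - \<theta>) * (ln R' - ln \<alpha>)"
    by (simp add: algebra_simps)
  also have "\<dots> \<le> (1 - \<theta>) * (ln \<beta> - ln \<alpha>)"
    using assms by (intro mult_left_mono) auto
  finally show ?thesis .
qed

lemma ratio_mixture_lower_bound:
  fixes A B A' B' \<alpha> m :: real
  assumes "0 < B" "0 < m" "m * B \<le> B'" "\<alpha> * B' \<le> A'"
    and harnack: "m * (A' - \<alpha> * B') \<le> A - \<alpha> * B"
  shows "m\<^sup>2 * (A' / B') + (1 - m\<^sup>2) * \<alpha> \<le> A / B"
proof -
  have B': "0 < B'" using assms(1-3) by (smt (verit) mult_pos_pos)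
  have "m * (m * B) * (A' / B' - \<alpha>) \<le> m * B' * (A' / B' - \<alpha>)"
    using assms B' by (intro mult_right_mono mult_left_mono) (auto simp: field_simps)
  also have "\<dots> = m * (A' - \<alpha> * B')"
    using B' by (simp add: field_simps)
  finally have "m\<^sup>2 * B * (A' / B' - \<alpha>) \<le> A - \<alpha> * B"
    using harnack by (simp add: power2_eq_square algebra_simps)
  then show ?thesis
    using assms(1) by (simp add: field_simps)
qed

locale entropic_ot = compact_prob M for M :: "'a::metric_space measure" +
  fixes eps :: real and c :: "'a \<Rightarrow> 'a \<Rightarrow> real"
  assumes eps_pos: "eps > 0"
    and c_sym: "c x y = c y x" and c_nonneg: "c x y \<ge> 0"
    and c_cont: "continuous_on UNIV (\<lambda>(x, y). c x y)"
begin

lemma continuous_on_c [continuous_intros]: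
  assumes "continuous_on S f" "continuous_on S g"
  shows "continuous_on S (\<lambda>z. c (f z) (g z))"
  using continuous_on_compose2[OF c_cont, of S "\<lambda>z. (f z, g z)"] assms
  by (auto intro: continuous_intros)

lemma continuous_on_kc [continuous_intros]:
  "continuous_on S f \<Longrightarrow> continuous_on S g \<Longrightarrow> continuous_on S (\<lambda>z. kc eps c (f z) (g z))"
  unfolding kc_def by (intro continuous_intros) (use eps_pos in auto)

definition c_sup :: real where
  "c_sup = Sup (range (\<lambda>(x, y). c x y))"

lemma c_le_c_sup: "c x y \<le> c_sup"
proof -
  have "bounded (range (\<lambda>(x, y). c x y))"
    using compact_Times[OF compact_UNIV compact_UNIV] c_cont
    by (intro compact_imp_bounded compact_continuous_image) auto
  then show ?thesis
    unfolding c_sup_def by (intro cSup_upper bounded_imp_bdd_above) auto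
qed

definition kc_lower :: real where
  "kc_lower = exp (- c_sup / eps)"

definition contraction_factor :: real where
  "contraction_factor = 1 - kc_lower\<^sup>2"

lemma kc_lower_pos: "0 < kc_lower"
  by (simp add: kc_lower_def)

lemma kc_lower_le: "kc_lower \<le> kc eps c x y"
  using c_le_c_sup[of x y] eps_pos by (simp add: kc_lower_def kc_def divide_right_mono)

lemma kc_le_1: "kc eps c x y \<le> 1"
  using c_nonneg[of x y] eps_pos by (simp add: kc_def)

lemma contraction_factor_bounds: "0 \<le> contraction_factor" "contraction_factor < 1"
  using kc_lower_le[of undefined undefined] kc_le_1[of undefined undefined] kc_lower_pos
  by (auto simp: contraction_factor_def power_le_one)

lemma kc_harnack:
  assumes w: "continuous_on UNIV w" and "\<And>x. 0 \<le> w x"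
  shows "kc_lower * (\<integral>x. w x * kc eps c x y' \<partial>M) \<le> (\<integral>x. w x * kc eps c x y \<partial>M)"
proof -
  have "kc_lower * kc eps c x y' \<le> kc eps c x y" for x
    using kc_lower_le kc_le_1 kc_lower_pos by (smt (verit) mult_left_le)
  then have "kc_lower * (w x * kc eps c x y') \<le> w x * kc eps c x y" for x
    using assms(2)[of x] by (metis mult.left_commute mult_left_mono)
  then have "(\<integral>x. kc_lower * (w x * kc eps c x y') \<partial>M) \<le> (\<integral>x. w x * kc eps c x y \<partial>M)"
    by (intro integral_mono continuous_integrable continuous_intros w)
  then show ?thesis by simp
qed

definition gibbs_integral :: "('a \<Rightarrow> real) \<Rightarrow> 'a \<Rightarrow> real" where
  "gibbs_integral g y = (\<integral>x. exp (g x / eps) * kc eps c x y \<partial>M)"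

lemma T_eps_gibbs_integral: "T_eps eps c g M y = - eps * ln (gibbs_integral g y)"
proof -
  have "exp ((g x - c x y) / eps) = exp (g x / eps) * kc eps c x y" for x
    by (simp add: kc_def exp_add[symmetric] diff_divide_distrib)
  then show ?thesis by (simp add: T_eps_def gibbs_integral_def)
qed

lemma gibbs_integral_pos: "continuous_on UNIV g \<Longrightarrow> 0 < gibbs_integral g y"
  unfolding gibbs_integral_def
  by (intro integral_pos_continuous continuous_intros) (use eps_pos in \<open>auto simp: kc_def\<close>)

lemma gibbs_integral_mono:
  assumes "continuous_on UNIV g" "continuous_on UNIV h" "\<And>x. g x \<le> h x"
  shows "gibbs_integral g y \<le> gibbs_integral h y"
  unfolding gibbs_integral_def using assms eps_pos
  by (intro integral_mono continuous_integrable continuous_intros mult_right_mono)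
    (auto simp: kc_def divide_right_mono)

lemma gibbs_integral_add_const:
  "gibbs_integral (\<lambda>x. g x + a) y = exp (a / eps) * gibbs_integral g y"
proof -
  have "(\<lambda>x. exp ((g x + a) / eps) * kc eps c x y) = (\<lambda>x. exp (a / eps) * (exp (g x / eps) * kc eps c x y))"
    by (simp add: add_divide_distrib exp_add mult_ac)
  then show ?thesis unfolding gibbs_integral_def by simp
qed

lemma T_eps_add_const:
  assumes "continuous_on UNIV g"
  shows "T_eps eps c (\<lambda>x. g x + a) M y = T_eps eps c g M y - a"
proof -
  have "T_eps eps c (\<lambda>x. g x + a) M y = - eps * (a / eps + ln (gibbs_integral g y))"
    unfolding T_eps_gibbs_integral gibbs_integral_add_const
    using gibbs_integral_pos[OF assms, of y] by (simp add: ln_mult)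
  then show ?thesis
    using eps_pos by (simp add: T_eps_gibbs_integral algebra_simps)
qed

lemma T_eps_antimono:
  assumes "continuous_on UNIV g" "continuous_on UNIV h" "\<And>x. g x \<le> h x"
  shows "T_eps eps c h M y \<le> T_eps eps c g M y"
  using gibbs_integral_mono[OF assms] gibbs_integral_pos[OF assms(1)] gibbs_integral_pos[OF assms(2)] eps_pos
  by (simp add: T_eps_gibbs_integral)

lemma T_eps_nonexpansive:
  assumes g: "continuous_on UNIV g" and h: "continuous_on UNIV h" and d: "\<And>x. \<bar>g x - h x\<bar> \<le> d"
  shows "\<bar>T_eps eps c g M y - T_eps eps c h M y\<bar> \<le> d"
proof -
  have "g x \<le> h x + d" "h x \<le> g x + d" for x
    using d[of x] by (auto simp: abs_le_iff)
  then have "T_eps eps c (\<lambda>x. h x + d) M y \<le> T_eps eps c g M y"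
    and "T_eps eps c (\<lambda>x. g x + d) M y \<le> T_eps eps c h M y"
    by (intro T_eps_antimono continuous_intros g h; simp)+
  then show ?thesis
    unfolding T_eps_add_const[OF g] T_eps_add_const[OF h] by linarith
qed

lemma T_eps_continuous:
  assumes "continuous_on UNIV g"
  shows "continuous_on UNIV (T_eps eps c g M)"
proof -
  have "continuous_on UNIV (\<lambda>p. g (snd p))"
    by (rule continuous_on_compose2[OF assms]) (auto intro: continuous_intros)
  then have "continuous_on UNIV (\<lambda>y. \<integral>x. exp (g (snd (y, x)) / eps) * kc eps c (snd (y, x)) (fst (y, x)) \<partial>M)"
    by (intro continuous_on_integral_param continuous_intros) (use eps_pos in auto)
  then have "continuous_on UNIV (gibbs_integral g)"
    by (simp add: gibbs_integral_def[abs_def])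
  then show ?thesis
    unfolding T_eps_gibbs_integral[abs_def]
    by (intro continuous_intros) (use gibbs_integral_pos[OF assms] in \<open>auto simp: less_le\<close>)
qed

lemma T_eps_uniform_limit:
  assumes "\<And>n. continuous_on UNIV (F n)" "continuous_on UNIV g"
    and "uniform_limit UNIV F g sequentially"
  shows "(\<lambda>n. T_eps eps c (F n) M y) \<longlonglongrightarrow> T_eps eps c g M y"
proof (rule tendstoI)
  fix e :: real assume "0 < e"
  then have "\<forall>\<^sub>F n in sequentially. \<forall>x\<in>UNIV. dist (F n x) (g x) < e / 2"
    using uniform_limitD[OF assms(3), of "e / 2"] by simp
  then show "\<forall>\<^sub>F n in sequentially. dist (T_eps eps c (F n) M y) (T_eps eps c g M y) < e"
  proof eventually_elim
    case (elim n)
    then have "\<bar>T_eps eps c (F n) M y - T_eps eps c g M y\<bar> \<le> e / 2"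
      by (intro T_eps_nonexpansive assms less_imp_le) (simp add: dist_real_def)
    then show ?case
      using \<open>0 < e\<close> by (simp add: dist_real_def)
  qed
qed

lemma gibbs_integral_diff_bounds:
  assumes f: "continuous_on UNIV f" and g: "continuous_on UNIV g"
    and "\<And>x. lo \<le> f x - g x" "\<And>x. f x - g x \<le> hi"
  shows "exp (lo / eps) * gibbs_integral g y \<le> gibbs_integral f y"
    and "gibbs_integral f y \<le> exp (hi / eps) * gibbs_integral g y"
proof -
  have "g x + lo \<le> f x" "f x \<le> g x + hi" for x
    using assms(3,4)[of x] by auto
  then have "gibbs_integral (\<lambda>x. g x + lo) y \<le> gibbs_integral f y"
    and "gibbs_integral f y \<le> gibbs_integral (\<lambda>x. g x + hi) y"
    by (intro gibbs_integral_mono continuous_intros f g; blast)+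
  then show "exp (lo / eps) * gibbs_integral g y \<le> gibbs_integral f y"
    and "gibbs_integral f y \<le> exp (hi / eps) * gibbs_integral g y"
    by (simp_all add: gibbs_integral_add_const)
qed

text \<open>
  With \<open>R z = gibbs_integral f z / gibbs_integral g z\<close>, Harnack's inequality applied to
  \<open>exp (g / \<epsilon>)\<close> and to \<open>exp (f / \<epsilon>) - \<alpha> exp (g / \<epsilon>) \<ge> 0\<close> shows that \<open>R y\<close> dominates the
  mixture \<open>kc_lower\<^sup>2 R y' + (1 - kc_lower\<^sup>2) \<alpha>\<close>, where \<open>\<alpha> = exp (min (f - g) / \<epsilon>) \<le> R\<close>.
\<close>
lemma T_eps_oscillation_contraction:
  assumes f: "continuous_on UNIV f" and g: "continuous_on UNIV g" and "0 \<le> a"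
    and osc: "\<And>x x'. (f x - g x) - (f x' - g x') \<le> a"
  shows "(T_eps eps c f M y - T_eps eps c g M y) - (T_eps eps c f M y' - T_eps eps c g M y')
    \<le> contraction_factor * a"
proof -
  obtain x0 where x0: "\<And>x. f x0 - g x0 \<le> f x - g x"
    using continuous_attains_inf[OF compact_UNIV _ continuous_on_diff[OF f g]] by auto
  define lo where "lo = f x0 - g x0"
  define \<alpha> where "\<alpha> = exp (lo / eps)"
  define A where "A = gibbs_integral f"
  define B where "B = gibbs_integral g"
  have A_pos: "0 < A z" and B_pos: "0 < B z" for z
    unfolding A_def B_def using gibbs_integral_pos f g by auto
  have diff_lo: "lo \<le> f x - g x" and diff_hi: "f x - g x \<le> lo + a" for x
    using x0[of x] osc[of x x0] by (auto simp: lo_def)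
  have lower: "\<alpha> * B z \<le> A z" and upper: "A z \<le> exp ((lo + a) / eps) * B z" for z
    unfolding \<alpha>_def A_def B_def using gibbs_integral_diff_bounds[OF f g diff_lo diff_hi] by auto
  have harnack_B: "kc_lower * B y \<le> B y'"
    unfolding B_def gibbs_integral_def using eps_pos by (intro kc_harnack continuous_intros g) auto
  have excess: "A z - \<alpha> * B z = (\<integral>x. (exp (f x / eps) - \<alpha> * exp (g x / eps)) * kc eps c x z \<partial>M)" for z
    unfolding A_def B_def gibbs_integral_def using f g eps_pos
    by (simp add: left_diff_distrib mult.assoc continuous_integrable continuous_intros)
  have "\<alpha> * exp (g x / eps) \<le> exp (f x / eps)" for x
    using x0[of x] eps_pos unfolding \<alpha>_def lo_def
    by (simp add: exp_add[symmetric] add_divide_distrib[symmetric] divide_right_mono)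
  then have harnack_excess: "kc_lower * (A y' - \<alpha> * B y') \<le> A y - \<alpha> * B y"
    unfolding excess using f g eps_pos by (intro kc_harnack continuous_intros) auto
  have "kc_lower\<^sup>2 * (A y' / B y') + (1 - kc_lower\<^sup>2) * \<alpha> \<le> A y / B y"
    using B_pos lower harnack_B harnack_excess kc_lower_pos
    by (intro ratio_mixture_lower_bound) auto
  then have "ln (A y' / B y') - ln (A y / B y) \<le> (1 - kc_lower\<^sup>2) * (ln (exp ((lo + a) / eps)) - ln \<alpha>)"
    using A_pos B_pos upper[of y'] kc_lower_pos kc_lower_le[of y y] kc_le_1[of y y]
    by (intro ln_mixture_contraction) (auto simp: \<alpha>_def field_simps power_le_one)
  then have "eps * (ln (A y' / B y') - ln (A y / B y)) \<le> contraction_factor * a"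
    using eps_pos by (simp add: \<alpha>_def contraction_factor_def diff_divide_distrib[symmetric] field_simps)
  moreover have "ln (A z / B z) = ln (A z) - ln (B z)" for z
    using A_pos[of z] B_pos[of z] by (simp add: ln_div)
  ultimately show ?thesis
    unfolding T_eps_gibbs_integral A_def B_def by (simp add: algebra_simps)
qed

section \<open>Existence and uniqueness of the Schroedinger potential\<close>

text \<open>
  Since \<open>T\<^sub>\<epsilon> (g + a) = T\<^sub>\<epsilon> g - a\<close>, the contraction controls only oscillations; normalising
  the iterates at a base point \<open>x0\<close> turns it into convergence.
\<close>
context
  fixes x0 :: 'a
begin

definition normalized_T :: "('a \<Rightarrow> real) \<Rightarrow> 'a \<Rightarrow> real" where
  "normalized_T g y = T_eps eps c g M y - T_eps eps c g M x0"

definition potential_iterate :: "nat \<Rightarrow> 'a \<Rightarrow> real" where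
  "potential_iterate n = (normalized_T ^^ n) (\<lambda>_. 0)"

lemma potential_iterate_Suc: "potential_iterate (Suc n) = normalized_T (potential_iterate n)"
  by (simp add: potential_iterate_def)

lemma potential_iterate_continuous: "continuous_on UNIV (potential_iterate n)"
  by (induction n)
    (simp_all add: potential_iterate_def normalized_T_def[abs_def] continuous_intros T_eps_continuous)

lemma potential_iterate_base: "potential_iterate n x0 = 0"
  by (cases n) (simp_all add: potential_iterate_def normalized_T_def)

lemma potential_iterate_osc:
  assumes "0 \<le> a" and osc1: "\<And>x x'. potential_iterate 1 x - potential_iterate 1 x' \<le> a"
  shows "(potential_iterate (Suc n) x - potential_iterate n x)
    - (potential_iterate (Suc n) x' - potential_iterate n x') \<le> contraction_factor ^ n * a"
proof (induction n arbitrary: x x')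
  case 0
  then show ?case using osc1 by (simp add: potential_iterate_def)
next
  case (Suc n)
  have "(T_eps eps c (potential_iterate (Suc n)) M x - T_eps eps c (potential_iterate n) M x)
      - (T_eps eps c (potential_iterate (Suc n)) M x' - T_eps eps c (potential_iterate n) M x')
      \<le> contraction_factor * (contraction_factor ^ n * a)"
    using Suc.IH assms(1) contraction_factor_bounds(1)
    by (intro T_eps_oscillation_contraction potential_iterate_continuous) auto
  then show ?case
    by (simp add: potential_iterate_Suc[of "Suc n"] potential_iterate_Suc[of n] normalized_T_def)
qed

lemma potential_iterate_uniform_limit:
  "\<exists>G. continuous_on UNIV G \<and> uniform_limit UNIV potential_iterate G sequentially"
proof -
  obtain B where B: "\<And>x. \<bar>potential_iterate 1 x\<bar> \<le> B"
    using continuous_bounded[OF potential_iterate_continuous] by blast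
  have osc1: "potential_iterate 1 x - potential_iterate 1 x' \<le> 2 * B" for x x'
    using B[of x] B[of x'] by (simp add: abs_le_iff)
  have "0 \<le> 2 * B" using B[of x0] by simp
  note osc = potential_iterate_osc[OF this osc1]
  define d where "d n x = potential_iterate (Suc n) x - potential_iterate n x" for n x
  have "norm (d n x) \<le> contraction_factor ^ n * (2 * B)" for n x
    using osc[of n x x0] osc[of n x0 x] potential_iterate_base[of n] potential_iterate_base[of "Suc n"]
    unfolding d_def real_norm_def abs_le_iff by linarith
  moreover have "summable (\<lambda>n. contraction_factor ^ n * (2 * B))"
    using contraction_factor_bounds by (intro summable_mult2 summable_geometric) simp
  ultimately have "uniform_limit UNIV (\<lambda>n x. \<Sum>i<n. d i x) (\<lambda>x. \<Sum>i. d i x) sequentially"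
    by (rule Weierstrass_m_test)
  moreover have "(\<lambda>n x. \<Sum>i<n. d i x) = potential_iterate"
    using sum_lessThan_telescope[of "\<lambda>i. potential_iterate i _"]
    by (simp add: d_def fun_eq_iff potential_iterate_def)
  ultimately have lim: "uniform_limit UNIV potential_iterate (\<lambda>x. \<Sum>i. d i x) sequentially"
    by simp
  moreover have "continuous_on UNIV (\<lambda>x. \<Sum>i. d i x)"
    by (rule uniform_limit_theorem[OF _ lim]) (simp_all add: potential_iterate_continuous)
  ultimately show ?thesis by blast
qed

lemma normalized_T_fixed_point: "\<exists>G. continuous_on UNIV G \<and> normalized_T G = G"
proof -
  obtain G where G: "continuous_on UNIV G" and lim: "uniform_limit UNIV potential_iterate G sequentially"
    using potential_iterate_uniform_limit by blast
  have "normalized_T G y = G y" for y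
  proof (rule LIMSEQ_unique)
    show "(\<lambda>n. potential_iterate (Suc n) y) \<longlonglongrightarrow> normalized_T G y"
      unfolding potential_iterate_Suc normalized_T_def
      by (intro tendsto_diff T_eps_uniform_limit potential_iterate_continuous G lim)
    show "(\<lambda>n. potential_iterate (Suc n) y) \<longlonglongrightarrow> G y"
      using LIMSEQ_Suc[OF tendsto_uniform_limitI[OF lim]] by simp
  qed
  with G show ?thesis by blast
qed

end

lemma T_eps_fixed_point_exists: "\<exists>f. continuous_on UNIV f \<and> f = T_eps eps c f M"
proof -
  obtain G where G: "continuous_on UNIV G" and G_fixed: "normalized_T undefined G = G"
    using normalized_T_fixed_point by blast
  define b where "b = T_eps eps c G M undefined"
  have "T_eps eps c (\<lambda>x. G x + b / 2) M y = G y + b / 2" for y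
    using fun_cong[OF G_fixed, of y] by (simp add: T_eps_add_const[OF G] normalized_T_def b_def)
  then show ?thesis
    by (intro exI[of _ "\<lambda>x. G x + b / 2"]) (auto intro: continuous_intros G)
qed

lemma T_eps_fixed_point_unique:
  assumes f: "continuous_on UNIV f" "f = T_eps eps c f M"
    and g: "continuous_on UNIV g" "g = T_eps eps c g M"
  shows "f = g"
proof -
  obtain xM where xM: "\<And>x. f x - g x \<le> f xM - g xM"
    using continuous_attains_sup[OF compact_UNIV _ continuous_on_diff[OF f(1) g(1)]] by auto
  obtain xm where xm: "\<And>x. f xm - g xm \<le> f x - g x"
    using continuous_attains_inf[OF compact_UNIV _ continuous_on_diff[OF f(1) g(1)]] by auto
  define a where "a = (f xM - g xM) - (f xm - g xm)"
  have "0 \<le> a" using xm[of xM] by (simp add: a_def)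
  moreover have "T_eps eps c f M z = f z" "T_eps eps c g M z = g z" for z
    using fun_cong[OF f(2)] fun_cong[OF g(2)] by simp_all
  moreover have "(f x - g x) - (f x' - g x') \<le> a" for x x'
    using xM[of x] xm[of x'] by (simp add: a_def)
  ultimately have "a \<le> contraction_factor * a"
    using T_eps_oscillation_contraction[OF f(1) g(1), of a xM xm] by (simp add: a_def)
  then have "(1 - contraction_factor) * a \<le> 0"
    by (simp add: algebra_simps)
  with \<open>0 \<le> a\<close> contraction_factor_bounds(2) have "a = 0"
    by (simp add: mult_le_0_iff)
  then have "f x - g x = f xm - g xm" for x
    using xM[of x] xm[of x] by (simp add: a_def)
  then have "f = (\<lambda>x. g x + (f xm - g xm))"
    by (auto simp: fun_eq_iff algebra_simps)
  moreover have "T_eps eps c (\<lambda>x. g x + (f xm - g xm)) M xm = g xm - (f xm - g xm)"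
    using T_eps_add_const[OF g(1)] fun_cong[OF g(2)] by simp
  ultimately show ?thesis
    using fun_cong[OF f(2), of xm] by auto
qed

lemma schr_pot_continuous: "continuous_on UNIV (schr_pot eps c M)"
  and schr_pot_fixed_point: "schr_pot eps c M = T_eps eps c (schr_pot eps c M) M"
proof -
  have "\<exists>!f. continuous_on UNIV f \<and> f = T_eps eps c f M"
    using T_eps_fixed_point_exists T_eps_fixed_point_unique by blast
  from theI'[OF this] show "continuous_on UNIV (schr_pot eps c M)" "schr_pot eps c M = T_eps eps c (schr_pot eps c M) M"
    unfolding schr_pot_def by auto
qed

section \<open>The Markov operator \<open>K\<^sub>\<mu>\<close>\<close>

lemma continuous_on_schr_pot [continuous_intros]:
  "continuous_on S f \<Longrightarrow> continuous_on S (\<lambda>z. schr_pot eps c M (f z))"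
  using continuous_on_compose2[OF schr_pot_continuous] by blast

lemma kmu_pos: "0 < kmu eps c M x y"
  by (simp add: kmu_def)

lemma continuous_on_kmu [continuous_intros]:
  "continuous_on S f \<Longrightarrow> continuous_on S g \<Longrightarrow> continuous_on S (\<lambda>z. kmu eps c M (f z) (g z))"
  unfolding kmu_def by (intro continuous_intros) (use eps_pos in auto)

lemma kmu_integral_eq_1: "(\<integral>y. kmu eps c M x y \<partial>M) = 1"
proof -
  let ?f = "schr_pot eps c M"
  have "ln (gibbs_integral ?f x) = - ?f x / eps"
    using fun_cong[OF schr_pot_fixed_point, of x] eps_pos by (simp add: T_eps_gibbs_integral field_simps)
  then have "gibbs_integral ?f x = exp (- ?f x / eps)"
    using gibbs_integral_pos[OF schr_pot_continuous, of x] by (metis exp_ln)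
  moreover have "kmu eps c M x y = exp (?f x / eps) * (exp (?f y / eps) * kc eps c y x)" for y
    by (simp add: kmu_def kc_def c_sym[of x y] exp_add[symmetric] add_divide_distrib diff_divide_distrib)
  ultimately show ?thesis
    by (simp add: gibbs_integral_def exp_add[symmetric])
qed

lemma Kop_continuous:
  assumes "continuous_on UNIV u"
  shows "continuous_on UNIV (Kop eps c M u)"
proof -
  have "continuous_on UNIV (\<lambda>p. u (snd p))"
    by (rule continuous_on_compose2[OF assms]) (auto intro: continuous_intros)
  then have "continuous_on UNIV (\<lambda>x. \<integral>y. kmu eps c M (fst (x, y)) (snd (x, y)) * u (snd (x, y)) \<partial>M)"
    by (intro continuous_on_integral_param continuous_intros)
  then show ?thesis by (simp add: Kop_def[abs_def])
qed

lemma Kop_integrable: "continuous_on UNIV u \<Longrightarrow> integrable M (\<lambda>y. kmu eps c M x y * u y)"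
  by (intro continuous_integrable continuous_intros)

lemma Kop_diff:
  "continuous_on UNIV u \<Longrightarrow> continuous_on UNIV v \<Longrightarrow>
    Kop eps c M (\<lambda>y. u y - v y) x = Kop eps c M u x - Kop eps c M v x"
  using Kop_integrable[of u x] Kop_integrable[of v x] by (simp add: Kop_def right_diff_distrib)

lemma Kop_const: "Kop eps c M (\<lambda>_. b) x = b"
  using kmu_integral_eq_1[of x] by (simp add: Kop_def)

lemma Kop_mono:
  assumes "continuous_on UNIV u" "continuous_on UNIV v" "\<And>y. u y \<le> v y"
  shows "Kop eps c M u x \<le> Kop eps c M v x"
  unfolding Kop_def using assms kmu_pos
  by (intro integral_mono Kop_integrable mult_left_mono) (auto intro: less_imp_le)

lemma Kop_eq_max_imp_AE_eq:
  assumes w: "continuous_on UNIV w" and le: "\<And>y. w y \<le> b" and eq: "Kop eps c M w x = b"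
  shows "AE y in M. w y = b"
proof -
  have "(\<integral>y. kmu eps c M x y * (b - w y) \<partial>M) = Kop eps c M (\<lambda>_. b) x - Kop eps c M w x"
    using Kop_diff[OF continuous_on_const w] by (simp add: Kop_def)
  then have "(\<integral>y. kmu eps c M x y * (b - w y) \<partial>M) = 0"
    by (simp add: Kop_const eq)
  moreover have "AE y in M. 0 \<le> kmu eps c M x y * (b - w y)"
    using le kmu_pos by (intro AE_I2 mult_nonneg_nonneg) (auto intro: less_imp_le)
  ultimately have "AE y in M. kmu eps c M x y * (b - w y) = 0"
    using integral_nonneg_eq_0_iff_AE[OF Kop_integrable[OF continuous_on_diff[OF continuous_on_const w]]]
    by simp
  then show ?thesis
  proof eventually_elim
    case (elim y)
    then show "w y = b" using kmu_pos[of x y] by simp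
  qed
qed

lemma Kop_AE_const:
  assumes w: "continuous_on UNIV w" and "AE y in M. w y = b"
  shows "Kop eps c M w x = b"
proof -
  have "AE y in M. kmu eps c M x y * w y = kmu eps c M x y * b"
    using assms(2) by eventually_elim simp
  then have "Kop eps c M w x = Kop eps c M (\<lambda>_. b) x"
    unfolding Kop_def by (intro integral_cong_AE continuous_measurable continuous_intros w)
  then show ?thesis by (simp add: Kop_const)
qed

lemma Kop_square_maximum_principle:
  assumes d: "continuous_on UNIV d" and eq: "\<And>x. d x - Kop eps c M (Kop eps c M d) x = b"
  shows "d x = d x'"
proof -
  define w where "w = Kop eps c M d"
  have w: "continuous_on UNIV w" unfolding w_def by (rule Kop_continuous[OF d])
  obtain x1 where x1: "\<And>x. d x \<le> d x1" using continuous_attains_sup[OF compact_UNIV _ d] by auto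
  obtain x2 where x2: "\<And>x. d x2 \<le> d x" using continuous_attains_inf[OF compact_UNIV _ d] by auto
  have w_le: "w y \<le> d x1" and w_ge: "d x2 \<le> w y" for y
    using Kop_mono[OF d continuous_on_const x1, of y] Kop_mono[OF continuous_on_const d x2, of y]
    by (simp_all add: w_def Kop_const)
  have "Kop eps c M w x1 \<le> d x1" and "d x2 \<le> Kop eps c M w x2"
    using Kop_mono[OF w continuous_on_const w_le] Kop_mono[OF continuous_on_const w w_ge]
    by (simp_all add: Kop_const)
  then have "b = 0"
    using eq[of x1] eq[of x2] unfolding w_def by linarith
  then have d_eq: "d x = Kop eps c M w x" for x
    using eq[of x] unfolding w_def by simp
  have "AE y in M. w y = d x1"
    using d_eq[of x1] by (intro Kop_eq_max_imp_AE_eq[OF w w_le]) simp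
  then have "d x = d x1" for x
    using Kop_AE_const[OF w, of "d x1" x] d_eq[of x] by linarith
  then show ?thesis by metis
qed

end


section \<open>Reproducing kernel Hilbert spaces\<close>

lemma pre_sq_superset:
  assumes "finite S" "fsupp a \<subseteq> S"
  shows "pre_sq k a = (\<Sum>y\<in>S. \<Sum>z\<in>S. a y * a z * k y z)"
proof -
  have zero: "a y = 0" if "y \<in> S - fsupp a" for y
    using that by (simp add: fsupp_def)
  have "pre_sq k a = (\<Sum>y\<in>fsupp a. \<Sum>z\<in>S. a y * a z * k y z)"
    unfolding pre_sq_def using assms by (intro sum.cong refl sum.mono_neutral_left) (auto simp: zero)
  also have "\<dots> = (\<Sum>y\<in>S. \<Sum>z\<in>S. a y * a z * k y z)"
    using assms by (intro sum.mono_neutral_left) (auto simp: zero)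
  finally show ?thesis .
qed

lemma pre_fun_superset:
  assumes "finite S" "fsupp a \<subseteq> S"
  shows "pre_fun k a x = (\<Sum>y\<in>S. a y * k y x)"
  unfolding pre_fun_def using assms by (intro sum.mono_neutral_left) (auto simp: fsupp_def)

lemma fsupp_add: "fsupp (\<lambda>y. a y + b y) \<subseteq> fsupp a \<union> fsupp b"
  and fsupp_diff: "fsupp (\<lambda>y. a y - b y) \<subseteq> fsupp a \<union> fsupp b"
  and fsupp_scale: "fsupp (\<lambda>y. r * a y) \<subseteq> fsupp a"
  by (auto simp: fsupp_def)

lemma pre_sq_parallelogram:
  assumes "finite (fsupp a)" "finite (fsupp b)"
  shows "pre_sq k (\<lambda>y. a y + b y) + pre_sq k (\<lambda>y. a y - b y) = 2 * pre_sq k a + 2 * pre_sq k b"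
proof -
  define S where "S = fsupp a \<union> fsupp b"
  have S: "finite S" "fsupp a \<subseteq> S" "fsupp b \<subseteq> S"
    "fsupp (\<lambda>y. a y + b y) \<subseteq> S" "fsupp (\<lambda>y. a y - b y) \<subseteq> S"
    using assms fsupp_add[of a b] fsupp_diff[of a b] by (auto simp: S_def)
  have "pre_sq k (\<lambda>y. a y + b y) + pre_sq k (\<lambda>y. a y - b y)
      = (\<Sum>y\<in>S. \<Sum>z\<in>S. (a y + b y) * (a z + b z) * k y z + (a y - b y) * (a z - b z) * k y z)"
    by (simp only: pre_sq_superset[OF S(1) S(4)] pre_sq_superset[OF S(1) S(5)] sum.distrib)
  also have "\<dots> = (\<Sum>y\<in>S. \<Sum>z\<in>S. 2 * (a y * a z * k y z) + 2 * (b y * b z * k y z))"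
    by (intro sum.cong refl) (simp add: algebra_simps)
  also have "\<dots> = 2 * pre_sq k a + 2 * pre_sq k b"
    by (simp only: pre_sq_superset[OF S(1) S(2)] pre_sq_superset[OF S(1) S(3)] sum.distrib sum_distrib_left)
  finally show ?thesis .
qed

lemma pre_sq_add_le:
  assumes "psd_kernel k" "finite (fsupp a)" "finite (fsupp b)"
  shows "pre_sq k (\<lambda>y. a y + b y) \<le> 2 * pre_sq k a + 2 * pre_sq k b"
proof -
  have "finite (fsupp (\<lambda>y. a y - b y))"
    using finite_subset[OF fsupp_diff[of a b]] assms(2,3) by simp
  then have "0 \<le> pre_sq k (\<lambda>y. a y - b y)"
    using assms(1) by (simp add: psd_kernel_def)
  then show ?thesis
    using pre_sq_parallelogram[OF assms(2,3), of k] by linarith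
qed

lemma pre_sq_scale:
  assumes "finite (fsupp a)"
  shows "pre_sq k (\<lambda>y. r * a y) = r\<^sup>2 * pre_sq k a"
proof -
  have "pre_sq k (\<lambda>y. r * a y) = (\<Sum>y\<in>fsupp a. \<Sum>z\<in>fsupp a. r * a y * (r * a z) * k y z)"
    by (rule pre_sq_superset[OF assms fsupp_scale])
  also have "\<dots> = (\<Sum>y\<in>fsupp a. \<Sum>z\<in>fsupp a. r\<^sup>2 * (a y * a z * k y z))"
    by (simp add: power2_eq_square mult_ac)
  also have "\<dots> = r\<^sup>2 * pre_sq k a"
    by (simp add: pre_sq_def sum_distrib_left)
  finally show ?thesis .
qed

lemma vanishing_if_le_comb:
  fixes P Q R :: "nat \<Rightarrow> nat \<Rightarrow> real"
  assumes P: "\<forall>e>0. \<exists>N. \<forall>m\<ge>N. \<forall>n\<ge>N. P m n < e"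
    and Q: "\<forall>e>0. \<exists>N. \<forall>m\<ge>N. \<forall>n\<ge>N. Q m n < e"
    and R: "\<And>m n. R m n \<le> K * (P m n + Q m n)" and "0 \<le> K"
  shows "\<forall>e>0. \<exists>N. \<forall>m\<ge>N. \<forall>n\<ge>N. R m n < e"
proof (intro allI impI)
  fix e :: real assume "e > 0"
  then have e': "e / (2 * K + 2) > 0" using \<open>0 \<le> K\<close> by simp
  obtain N1 where N1: "\<forall>m\<ge>N1. \<forall>n\<ge>N1. P m n < e / (2 * K + 2)" using P e' by blast
  obtain N2 where N2: "\<forall>m\<ge>N2. \<forall>n\<ge>N2. Q m n < e / (2 * K + 2)" using Q e' by blast
  have "R m n < e" if "m \<ge> max N1 N2" "n \<ge> max N1 N2" for m n
  proof -
    have "R m n \<le> K * (2 * (e / (2 * K + 2)))"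
      using N1 N2 that R[of m n] \<open>0 \<le> K\<close>
      by (smt (verit, best) max.bounded_iff mult_left_mono)
    also have "\<dots> < e"
      using \<open>e > 0\<close> \<open>0 \<le> K\<close> by (simp add: field_simps)
    finally show ?thesis .
  qed
  then show "\<exists>N. \<forall>m\<ge>N. \<forall>n\<ge>N. R m n < e" by blast
qed

lemma rkhs_add:
  assumes k: "psd_kernel k" and "f \<in> rkhs k" "g \<in> rkhs k"
  shows "(\<lambda>x. f x + g x) \<in> rkhs k"
proof -
  obtain A B where A: "rkhs_approx k f A" and B: "rkhs_approx k g B"
    using assms(2,3) by (auto simp: rkhs_def)
  define C where "C = (\<lambda>n y. A n y + B n y)"
  have fin: "finite (fsupp (A n))" "finite (fsupp (B n))" for n
    using A B by (auto simp: rkhs_approx_def)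
  then have fin_C: "finite (fsupp (C n))" for n
    using finite_subset[OF fsupp_add[of "A n" "B n"]] by (simp add: C_def)
  have fin_diff: "finite (fsupp (\<lambda>y. A m y - A n y))" "finite (fsupp (\<lambda>y. B m y - B n y))" for m n
    using finite_subset[OF fsupp_diff[of "A m" "A n"]] finite_subset[OF fsupp_diff[of "B m" "B n"]] fin
    by simp_all
  have "pre_fun k (C n) x = pre_fun k (A n) x + pre_fun k (B n) x" for n x
    using fin[of n] fsupp_add[of "A n" "B n"]
    by (simp add: pre_fun_superset[of "fsupp (A n) \<union> fsupp (B n)"] C_def sum.distrib distrib_right)
  then have "(\<lambda>n. pre_fun k (C n) x) \<longlonglongrightarrow> f x + g x" for x
    using A B by (simp add: rkhs_approx_def tendsto_add)
  moreover have "pre_sq k (\<lambda>y. C m y - C n y)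
      \<le> 2 * (pre_sq k (\<lambda>y. A m y - A n y) + pre_sq k (\<lambda>y. B m y - B n y))" for m n
    using pre_sq_add_le[OF k fin_diff(1)[of m n] fin_diff(2)[of m n]]
    by (simp add: C_def algebra_simps)
  then have "\<forall>e>0. \<exists>N. \<forall>m\<ge>N. \<forall>n\<ge>N. pre_sq k (\<lambda>y. C m y - C n y) < e"
    by (rule vanishing_if_le_comb[rotated 2]) (use A B in \<open>auto simp: rkhs_approx_def\<close>)
  ultimately have "rkhs_approx k (\<lambda>x. f x + g x) C"
    using fin_C by (simp add: rkhs_approx_def)
  then show ?thesis by (auto simp: rkhs_def)
qed

lemma rkhs_scale:
  assumes "f \<in> rkhs k"
  shows "(\<lambda>x. r * f x) \<in> rkhs k"
proof -
  obtain A where A: "rkhs_approx k f A"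
    using assms by (auto simp: rkhs_def)
  define C where "C = (\<lambda>n y. r * A n y)"
  have fin: "finite (fsupp (A n))" for n
    using A by (auto simp: rkhs_approx_def)
  then have fin_C: "finite (fsupp (C n))" for n
    using finite_subset[OF fsupp_scale[of r "A n"]] by (simp add: C_def)
  have fin_diff: "finite (fsupp (\<lambda>y. A m y - A n y))" for m n
    using finite_subset[OF fsupp_diff[of "A m" "A n"]] fin by simp
  have "pre_fun k (C n) x = r * pre_fun k (A n) x" for n x
  proof -
    have "pre_fun k (C n) x = (\<Sum>y\<in>fsupp (A n). r * A n y * k y x)"
      unfolding C_def by (rule pre_fun_superset[OF fin fsupp_scale])
    then show ?thesis by (simp add: pre_fun_def sum_distrib_left mult.assoc)
  qed
  then have "(\<lambda>n. pre_fun k (C n) x) \<longlonglongrightarrow> r * f x" for x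
    using A by (simp add: rkhs_approx_def tendsto_mult_left)
  moreover have "pre_sq k (\<lambda>y. C m y - C n y)
      \<le> r\<^sup>2 / 2 * (pre_sq k (\<lambda>y. A m y - A n y) + pre_sq k (\<lambda>y. A m y - A n y))" for m n
    using pre_sq_scale[OF fin_diff[of m n], of k r] by (simp add: C_def right_diff_distrib)
  then have "\<forall>e>0. \<exists>N. \<forall>m\<ge>N. \<forall>n\<ge>N. pre_sq k (\<lambda>y. C m y - C n y) < e"
    by (rule vanishing_if_le_comb[rotated 2]) (use A in \<open>auto simp: rkhs_approx_def\<close>)
  ultimately have "rkhs_approx k (\<lambda>x. r * f x) C"
    using fin_C by (simp add: rkhs_approx_def)
  then show ?thesis by (auto simp: rkhs_def)
qed

lemma rkhs_section: "(\<lambda>y. k x y) \<in> rkhs k"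
proof -
  define A where "A n y = (if y = x then 1 else 0 :: real)" for n :: nat and y
  have "fsupp (A n) = {x}" "fsupp (\<lambda>y. A m y - A n y) = {}" for m n
    by (auto simp: A_def fsupp_def)
  then have "rkhs_approx k (\<lambda>y. k x y) A"
    by (simp add: rkhs_approx_def pre_fun_def pre_sq_def A_def)
  then show ?thesis by (auto simp: rkhs_def)
qed

lemma in_dual_fun_upd:
  assumes k: "psd_kernel k" and \<sigma>: "in_dual k \<sigma>" and u: "u \<notin> rkhs k"
  shows "in_dual k (\<sigma>(u := r))"
  unfolding in_dual_def
proof (intro conjI ballI allI)
  have agree: "(\<sigma>(u := r)) f = \<sigma> f" if "f \<in> rkhs k" for f
    using that u by auto
  show "(\<sigma>(u := r)) (\<lambda>x. f x + g x) = (\<sigma>(u := r)) f + (\<sigma>(u := r)) g" if "f \<in> rkhs k" "g \<in> rkhs k" for f g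
    unfolding agree[OF rkhs_add[OF k that]] agree[OF that(1)] agree[OF that(2)]
    using that \<sigma> by (simp add: in_dual_def)
  show "(\<sigma>(u := r)) (\<lambda>x. s * f x) = s * (\<sigma>(u := r)) f" if "f \<in> rkhs k" for f s
    unfolding agree[OF rkhs_scale[OF that]] agree[OF that]
    using that \<sigma> by (simp add: in_dual_def)
  obtain C where "\<forall>f\<in>rkhs k. \<bar>\<sigma> f\<bar> \<le> C * rkhs_norm k f"
    using \<sigma> by (auto simp: in_dual_def)
  then show "\<exists>C. \<forall>f\<in>rkhs k. \<bar>(\<sigma>(u := r)) f\<bar> \<le> C * rkhs_norm k f"
    using u by (intro exI[of _ C]) auto
qed

section \<open>Energy dissipation along the flow\<close>

lemma wstar_deriv_fun_upd:
  assumes k: "psd_kernel (kmu eps c (\<mu> t))" and \<sigma>: "wstar_deriv eps c \<mu> t \<sigma>"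
    and u: "u \<notin> rkhs (kmu eps c (\<mu> t))"
  shows "wstar_deriv eps c \<mu> t (\<sigma>(u := r))"
  unfolding wstar_deriv_def
proof (intro conjI ballI)
  show "in_dual (kmu eps c (\<mu> t)) (\<sigma>(u := r))"
    using in_dual_fun_upd[OF k _ u] \<sigma> by (simp add: wstar_deriv_def)
  fix \<phi> assume \<phi>: "\<phi> \<in> rkhs (kmu eps c (\<mu> t))"
  then have "(\<sigma>(u := r)) \<phi> = \<sigma> \<phi>"
    using u by auto
  then show "((\<lambda>s. ((\<integral>x. \<phi> x \<partial>\<mu> s) - (\<integral>x. \<phi> x \<partial>\<mu> t)) / (s - t)) \<longlongrightarrow> (\<sigma>(u := r)) \<phi>)
      (at t within {0..})"
    using \<sigma> \<phi> by (simp add: wstar_deriv_def)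
qed

lemma Hmap_fun_upd:
  assumes "u \<notin> rkhs (kmu eps c M)"
  shows "Hmap eps c M (\<sigma>(u := r)) = Hmap eps c M \<sigma>"
proof
  fix x
  have "(\<lambda>y. kmu eps c M x y) \<noteq> u"
    using rkhs_section[of "kmu eps c M" x] assms by auto
  then show "Hmap eps c M (\<sigma>(u := r)) x = Hmap eps c M \<sigma> x"
    by (simp add: Hmap_def)
qed

lemma inv_res_solves:
  assumes "continuous_on UNIV u" "\<And>x. u x - Kop eps c M (Kop eps c M u) x - g x = C"
  shows "continuous_on UNIV (inv_res eps c M g)"
    and "\<exists>C'. \<forall>x. inv_res eps c M g x - Kop eps c M (Kop eps c M (inv_res eps c M g)) x - g x = C'"
  using someI[of "\<lambda>u. continuous_on UNIV u \<and> (\<exists>C. \<forall>x. u x - Kop eps c M (Kop eps c M u) x - g x = C)" u]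
    assms by (auto simp: inv_res_def)

lemma energy_derivative_at_contact:
  fixes \<mu> :: "real \<Rightarrow> 'a::metric_space measure" and V p u :: "'a \<Rightarrow> real"
  assumes "compact (UNIV :: 'a set)" and prob: "\<And>s. 0 \<le> s \<Longrightarrow> is_prob (\<mu> s)" and "0 < t"
    and p: "continuous_on UNIV p" "\<And>x. p x \<le> 0" "(\<integral>x. p x \<partial>\<mu> t) = 0"
    and u: "continuous_on UNIV u"
    and V: "\<And>x. V x + p x + a * u x = K"
    and E: "((\<lambda>s. energy V (\<mu> s)) has_real_derivative D) (at t within {0..})"
    and U: "((\<lambda>s. \<integral>x. u x \<partial>\<mu> s) has_real_derivative L) (at t within {0..})"
  shows "D = - a * L"
proof -
  have at_t: "at t within {0..} = at t"
    using \<open>0 < t\<close> by (intro at_within_interior) (simp add: interior_real_atLeast)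
  define Q where "Q s = K - energy V (\<mu> s) - a * (\<integral>x. u x \<partial>\<mu> s)" for s
  have Q_eq: "Q s = (\<integral>x. p x \<partial>\<mu> s)" if "0 \<le> s" for s
  proof -
    interpret compact_prob "\<mu> s"
      using assms(1) prob[OF that] by unfold_locales
    have "V = (\<lambda>x. K - p x - a * u x)"
      using V by (auto simp: fun_eq_iff algebra_simps)
    then show ?thesis
      using continuous_integrable[OF p(1)] continuous_integrable[OF u]
      by (simp add: Q_def energy_def prob_space)
  qed
  have "(Q has_real_derivative - D - a * L) (at t)"
    unfolding Q_def using E U at_t by (auto intro!: derivative_eq_intros)
  moreover have "Q s \<le> Q t" if "\<bar>t - s\<bar> < t" for s
  proof -
    interpret compact_prob "\<mu> s"
      using assms(1) prob that by unfold_locales auto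
    have "(\<integral>x. p x \<partial>\<mu> s) \<le> (\<integral>x. 0 \<partial>\<mu> s)"
      by (intro integral_mono continuous_integrable p) auto
    then show ?thesis
      using Q_eq[of s] Q_eq[of t] that \<open>0 < t\<close> p(3) by simp
  qed
  ultimately have "- D - a * L = 0"
    using \<open>0 < t\<close> by (intro DERIV_local_max) auto
  then show ?thesis by simp
qed

context entropic_ot
begin

lemma psd_kernel_kmu:
  assumes "psd_kernel (kc eps c)"
  shows "psd_kernel (kmu eps c M)"
  unfolding psd_kernel_def
proof (intro conjI allI impI)
  show "kmu eps c M x y = kmu eps c M y x" for x y
    by (simp add: kmu_def c_sym[of x y] add.commute)
  fix a :: "'a \<Rightarrow> real" assume fa: "finite (fsupp a)"
  define b where "b y = a y * exp (schr_pot eps c M y / eps)" for y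
  have "fsupp b = fsupp a" by (auto simp: b_def fsupp_def)
  moreover have "b y * b z * kc eps c y z = a y * a z * kmu eps c M y z" for y z
    by (simp add: b_def kc_def kmu_def exp_add[symmetric] add_divide_distrib diff_divide_distrib)
  ultimately have "pre_sq (kmu eps c M) a = pre_sq (kc eps c) b"
    by (simp add: pre_sq_def)
  then show "0 \<le> pre_sq (kmu eps c M) a"
    using assms fa \<open>fsupp b = fsupp a\<close> by (simp add: psd_kernel_def)
qed

lemma Kop_square_resolvent_unique:
  assumes u: "continuous_on UNIV u" "\<And>x. u x - Kop eps c M (Kop eps c M u) x - g x = C1"
    and v: "continuous_on UNIV v" "\<And>x. v x - Kop eps c M (Kop eps c M v) x - g x = C2"
  shows "u x - v x = u x' - v x'"
proof (rule Kop_square_maximum_principle)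
  show "continuous_on UNIV (\<lambda>x. u x - v x)"
    by (intro continuous_intros u v)
  have "Kop eps c M (\<lambda>x. u x - v x) = (\<lambda>x. Kop eps c M u x - Kop eps c M v x)"
    using Kop_diff[OF u(1) v(1)] by (simp add: fun_eq_iff)
  then show "u x - v x - Kop eps c M (Kop eps c M (\<lambda>x. u x - v x)) x = C1 - C2" for x
    using u(2)[of x] v(2)[of x] Kop_diff[OF Kop_continuous[OF u(1)] Kop_continuous[OF v(1)]]
    by simp
qed

lemma sinkhorn_energy_derivative:
  assumes psd: "psd_kernel (kc eps c)"
    and M: "M = \<mu> t" and prob: "\<And>s. 0 \<le> s \<Longrightarrow> is_prob (\<mu> s)" and "0 < t"
    and \<sigma>: "wstar_deriv eps c \<mu> t \<sigma>"
    and u: "continuous_on UNIV u" "\<And>x. u x - Kop eps c M (Kop eps c M u) x - Hmap eps c M \<sigma> x = C'"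
    and p: "continuous_on UNIV p" "\<And>x. p x \<le> 0" "\<And>x. x \<in> msupport M \<Longrightarrow> p x = 0"
    and V: "\<And>x. eps / 2 * u x + V x + p x = C"
    and E: "((\<lambda>s. energy V (\<mu> s)) has_real_derivative D) (at t within {0..})"
  shows "\<exists>\<sigma>'. wstar_deriv eps c \<mu> t \<sigma>' \<and> D = - gmetric eps c M \<sigma>' \<sigma>'"
proof -
  define u0 where "u0 = inv_res eps c M (Hmap eps c M \<sigma>)"
  show ?thesis
  proof (cases "u0 \<in> rkhs (kmu eps c M)")
    case True
    obtain C1 where u0: "continuous_on UNIV u0"
      "\<And>x. u0 x - Kop eps c M (Kop eps c M u0) x - Hmap eps c M \<sigma> x = C1"
      using inv_res_solves[OF u] unfolding u0_def by blast
    define \<delta> where "\<delta> = u0 undefined - u undefined"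
    have "u0 x = u x + \<delta>" for x
      using Kop_square_resolvent_unique[OF u0 u, of x undefined] by (simp add: \<delta>_def)
    then have "V x + p x + eps / 2 * u0 x = C + eps / 2 * \<delta>" for x
      using V[of x] by (simp add: distrib_left)
    moreover have "((\<lambda>s. \<integral>x. u0 x \<partial>\<mu> s) has_real_derivative \<sigma> u0) (at t within {0..})"
      using \<sigma> True M by (simp add: wstar_deriv_def has_field_derivative_iff)
    moreover have "(\<integral>x. p x \<partial>\<mu> t) = 0"
      using integral_eq_0_if_nonpos_vanishing_on_msupport[OF p] M by simp
    ultimately have "D = - (eps / 2) * \<sigma> u0"
      using energy_derivative_at_contact[OF compact_UNIV prob \<open>0 < t\<close> p(1,2) _ u0(1) _ E] by blast
    then show ?thesis
      using \<sigma> by (auto simp: gmetric_def u0_def)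
  next
    case False
    \<comment> \<open>\<open>\<sigma>\<close> is a total function constrained only on \<open>H\<^sub>\<mu>\<close>, so its value at \<open>u0 \<notin> H\<^sub>\<mu>\<close> is free.\<close>
    define \<sigma>' where "\<sigma>' = \<sigma>(u0 := - 2 * D / eps)"
    have "wstar_deriv eps c \<mu> t \<sigma>'"
      unfolding \<sigma>'_def using wstar_deriv_fun_upd psd_kernel_kmu[OF psd] \<sigma> False M by simp
    moreover have "gmetric eps c M \<sigma>' \<sigma>' = - D"
      using Hmap_fun_upd[OF False] eps_pos by (simp add: gmetric_def \<sigma>'_def u0_def)
    ultimately show ?thesis by auto
  qed
qed

end

theorem mainTheorem12:
  fixes eps :: real and c :: "'a::metric_space \<Rightarrow> 'a \<Rightarrow> real"
    and V :: "'a \<Rightarrow> real" and \<mu> :: "real \<Rightarrow> 'a measure"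
  assumes "compact (UNIV :: 'a set)"
    and "eps > 0"
    and "\<forall>x y. c x y = c y x" and "\<forall>x y. c x y \<ge> 0"
    and "continuous_on UNIV (\<lambda>(x, y). c x y)"
    and "psd_kernel (kc eps c)" and "universal_kernel (kc eps c)"
    and "continuous_on UNIV V"
    and "sinkhorn_flow eps c V \<mu>"
  shows "AE t in lborel. t \<ge> 0 \<longrightarrow>
           (\<lambda>s. energy V (\<mu> s)) differentiable (at t within {0..}) \<longrightarrow>
           (\<exists>\<sigma>. wstar_deriv eps c \<mu> t \<sigma> \<and>
              ((\<lambda>s. energy V (\<mu> s)) has_real_derivative (- gmetric eps c (\<mu> t) \<sigma> \<sigma>)) (at t within {0..}))"
proof -
  have prob: "\<And>s. 0 \<le> s \<Longrightarrow> is_prob (\<mu> s)"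
    using assms(9) by (simp add: sinkhorn_flow_def)
  note flow = assms(9)[unfolded sinkhorn_flow_def, THEN conjunct2, THEN conjunct2]
  show ?thesis
    using flow AE_lborel_singleton[of 0]
  proof eventually_elim
    case (elim t)
    show ?case
    proof (intro impI)
      assume "0 \<le> t" and "(\<lambda>s. energy V (\<mu> s)) differentiable (at t within {0..})"
      then obtain D where E: "((\<lambda>s. energy V (\<mu> s)) has_real_derivative D) (at t within {0..})"
        by (auto simp: real_differentiable_def)
      have "0 < t" using \<open>0 \<le> t\<close> elim(2) by simp
      interpret entropic_ot "\<mu> t" eps c
        using assms(1-5) prob \<open>0 \<le> t\<close> by unfold_locales auto
      from elim(1) \<open>0 \<le> t\<close> obtain \<sigma> u p C C' where \<sigma>: "wstar_deriv eps c \<mu> t \<sigma>"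
        and u: "continuous_on UNIV u" "\<forall>x. u x - Kop eps c (\<mu> t) (Kop eps c (\<mu> t) u) x - Hmap eps c (\<mu> t) \<sigma> x = C'"
        and p: "continuous_on UNIV p" "\<forall>x. p x \<le> 0" "\<forall>x\<in>msupport (\<mu> t). p x = 0"
        and V: "\<forall>x. eps / 2 * u x + V x + p x = C"
        by blast
      show "\<exists>\<sigma>. wstar_deriv eps c \<mu> t \<sigma> \<and>
          ((\<lambda>s. energy V (\<mu> s)) has_real_derivative - gmetric eps c (\<mu> t) \<sigma> \<sigma>) (at t within {0..})"
        using sinkhorn_energy_derivative[OF assms(6) refl prob \<open>0 < t\<close> \<sigma> u(1) u(2)[rule_format]
            p(1) p(2)[rule_format] p(3)[rule_format] V[rule_format] E] E
        by auto
    qed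
  qed
qed

end
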